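(* Let $N\ge1$, $H=(H_1,\dots,H_N)\in]0,1[^N$, $a\in\mathbb{R}^N\setminus\{(0,\dots,0)\}$, let $S^H(a)$ be the mixed sub-fractional Brownian motion with parameters $N,a,H$, and let $u>1$. There is a constant $c>0$ such that for all $s,t\in[0,\infty)$ with $s\neq t$, $$\mathbb{E}\Big(\big(|s-t|+|S^H_t(a)-S^H_s(a)|\big)^{-u}\Big)\le c\,|t-s|^{1-u}\sigma^{-1}(s,t),\qquad\text{where }\sigma^2(s,t)=\mathbb{E}\big(S^H_t(a)-S^H_s(a)\big)^2.$$
   Context: Let $(\Omega,\mathcal F,\mathbb P)$ be a probability space. For $K\in]0,1[$, a fractional Brownian motion on $\mathbb{R}$ with Hurst index $K$ is a continuous centered Gaussian process $\{B^K(t),t\in\mathbb{R}\}$ with $\mathrm{Cov}(B^K(t),B^K(s))=\frac12(|t|^{2K}+|s|^{2K}-|t-s|^{2K})$. The sub-fractional Brownian motion (sfBm) of index $K$ is $\xi^K_t=(B^K_t+B^K_{-t})/\sqrt2$, $t\ge0$; it is a continuous centered Gaussian process with $\mathrm{Cov}(\xi^K_t,\xi^K_s)=s^{2K}+t^{2K}-\frac12\big((s+t)^{2K}+|t-s|^{2K}\big)$. For $N\ge1$, $H\in]0,1[^N$, $a\in\mathbb{R}^N\setminus\{0\}$, the mixed sub-fractional Brownian motion (msfBm) is $S^H_t(a)=\sum_{i=1}^N a_i\xi^{H_i}(t)$, $t\ge0$, where $\xi^{H_1},\dots,\xi^{H_N}$ are independent sfBms with indices $H_1,\dots,H_N$.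 *)

theory Defs
  imports "HOL-Probability.Probability"
begin

definition centered_gaussian :: "'a measure \<Rightarrow> ('a \<Rightarrow> real) \<Rightarrow> bool" where
  "centered_gaussian M X \<longleftrightarrow>
     X \<in> borel_measurable M \<and>
     ((AE \<omega> in M. X \<omega> = 0) \<or> (\<exists>\<sigma>>0. distributed M lborel X (normal_density 0 \<sigma>)))"

definition sfbm_cov :: "real \<Rightarrow> real \<Rightarrow> real \<Rightarrow> real" where
  "sfbm_cov K s t = s powr (2*K) + t powr (2*K)
      - ((s + t) powr (2*K) + \<bar>t - s\<bar> powr (2*K)) / 2"

definition is_sfbm :: "'a measure \<Rightarrow> real \<Rightarrow> (real \<Rightarrow> 'a \<Rightarrow> real) \<Rightarrow> bool" where
  "is_sfbm M K \<xi> \<longleftrightarrow>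
     (\<forall>T c. finite T \<and> T \<subseteq> {0..} \<longrightarrow>
        centered_gaussian M (\<lambda>\<omega>. \<Sum>t\<in>T. c t * \<xi> t \<omega>)) \<and>
     (\<forall>s t. 0 \<le> s \<and> 0 \<le> t \<longrightarrow>
        integral\<^sup>L M (\<lambda>\<omega>. \<xi> t \<omega> * \<xi> s \<omega>) = sfbm_cov K s t) \<and>
     (\<forall>\<omega>\<in>space M. continuous_on {0..} (\<lambda>t. \<xi> t \<omega>))"

definition sfbm_path :: "(real \<Rightarrow> 'a \<Rightarrow> real) \<Rightarrow> 'a \<Rightarrow> real \<Rightarrow> real" where
  "sfbm_path \<xi> \<omega> = restrict (\<lambda>t. \<xi> t \<omega>) {0..}"

definition msfbm :: "nat \<Rightarrow> (nat \<Rightarrow> real) \<Rightarrow> (nat \<Rightarrow> real \<Rightarrow> 'a \<Rightarrow> real) \<Rightarrow> real \<Rightarrow> 'a \<Rightarrow> real" where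
  "msfbm N a \<xi> t \<omega> = (\<Sum>i<N. a i * \<xi> i t \<omega>)"

end

theory Submission
  imports Defs "HOL-Real_Asymp.Real_Asymp"
begin

text \<open>Each component of the msfbm has increments with strictly positive variance, because
  \<open>(a + b)\<^sup>p + (a - b)\<^sup>p < 2a\<^sup>p + 2b\<^sup>p\<close> for \<open>0 < p < 2\<close>; by independence the increment
  \<open>S\<^sub>t - S\<^sub>s\<close> is therefore a nondegenerate centred normal variable with standard deviation
  \<open>\<sigma>(s,t)\<close>. Bounding its density by \<open>1/\<sigma>(s,t)\<close> reduces the expectation to
  \<open>\<integral> (h + |x|)\<^sup>-\<^sup>u dx = 2h\<^sup>1\<^sup>-\<^sup>u/(u - 1)\<close> with \<open>h = |t - s|\<close>, so \<open>c = 2/(u - 1)\<close> works.\<close>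

subsection \<open>Integrals of \<open>(h + |x|)\<^sup>-\<^sup>u\<close>\<close>

lemma nn_integral_shifted_powr_halfline:
  fixes h u :: real
  assumes h: "h > 0" and u: "u > 1"
  shows "(\<integral>\<^sup>+x. ennreal ((h + x) powr (-u)) * indicator {0..} x \<partial>lborel)
    = ennreal (h powr (1 - u) / (u - 1))"
proof -
  have "(\<integral>\<^sup>+x. ennreal ((h + x) powr (-u)) * indicator {0..} x \<partial>lborel)
      = ennreal (0 - (- ((h + 0) powr (1 - u)) / (u - 1)))"
  proof (rule nn_integral_FTC_atLeast[where F = "\<lambda>y. - ((h + y) powr (1 - u)) / (u - 1)"])
    show "(\<lambda>x. (h + x) powr - u) \<in> borel_measurable borel" by measurable
    show "((\<lambda>y. - ((h + y) powr (1 - u)) / (u - 1)) \<longlongrightarrow> 0) at_top"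
      using h u by real_asymp
    fix x :: real assume x: "0 \<le> x"
    show "0 \<le> (h + x) powr - u" by simp
    have hx: "h + x > 0" using h x by simp
    have "DERIV (\<lambda>y. (h + y) powr (1 - u)) x :> (1 - u) * (h + x) powr ((1 - u) - of_nat 1) * 1"
      by (rule DERIV_fun_powr) (auto intro!: derivative_eq_intros simp: hx)
    from DERIV_cdivide[OF DERIV_minus[OF this], of "u - 1"]
    have "DERIV (\<lambda>y. - ((h + y) powr (1 - u)) / (u - 1)) x
        :> - ((1 - u) * (h + x) powr ((1 - u) - of_nat 1) * 1) / (u - 1)"
      by simp
    moreover have "- ((1 - u) * (h + x) powr ((1 - u) - of_nat 1) * 1) / (u - 1) = (h + x) powr (-u)"
      using u by (simp add: field_simps)
    ultimately show "((\<lambda>y. - ((h + y) powr (1 - u)) / (u - 1)) has_real_derivative (h + x) powr - u) (at x)"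
      by simp
  qed
  then show ?thesis by simp
qed

lemma nn_integral_shifted_powr_abs_le:
  fixes h u :: real
  assumes h: "h > 0" and u: "u > 1"
  shows "(\<integral>\<^sup>+x. ennreal ((h + \<bar>x\<bar>) powr (-u)) \<partial>lborel) \<le> ennreal (2 * h powr (1 - u) / (u - 1))"
proof -
  define g where "g x = ennreal ((h + x) powr (-u)) * indicator {0..} x" for x :: real
  have [measurable]: "g \<in> borel_measurable borel" unfolding g_def by measurable
  have "(\<integral>\<^sup>+x. ennreal ((h + \<bar>x\<bar>) powr (-u)) \<partial>lborel) \<le> (\<integral>\<^sup>+x. g x + g (0 + (-1) * x) \<partial>lborel)"
    by (rule nn_integral_mono) (auto simp: g_def split: split_indicator)
  also have "\<dots> = (\<integral>\<^sup>+x. g x \<partial>lborel) + (\<integral>\<^sup>+x. g (0 + (-1) * x) \<partial>lborel)"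
    by (rule nn_integral_add) auto
  also have "(\<integral>\<^sup>+x. g (0 + (-1) * x) \<partial>lborel) = (\<integral>\<^sup>+x. g x \<partial>lborel)"
    using nn_integral_real_affine[of g "-1" 0] by simp
  also have "(\<integral>\<^sup>+x. g x \<partial>lborel) = ennreal (h powr (1 - u) / (u - 1))"
    unfolding g_def by (rule nn_integral_shifted_powr_halfline[OF h u])
  also have "ennreal (h powr (1 - u) / (u - 1)) + ennreal (h powr (1 - u) / (u - 1))
      = ennreal (2 * h powr (1 - u) / (u - 1))"
    using u by (subst ennreal_plus[symmetric]) auto
  finally show ?thesis .
qed

lemma normal_density_le_inverse:
  assumes "\<sigma> > 0"
  shows "normal_density \<mu> \<sigma> x \<le> 1 / \<sigma>"
proof -
  have "sqrt (2 * pi * \<sigma>\<^sup>2) = sqrt (2 * pi) * \<sigma>"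
    using assms by (simp add: real_sqrt_mult)
  moreover have "sqrt (2 * pi) \<ge> 1" using pi_gt3 by simp
  ultimately have "sqrt (2 * pi * \<sigma>\<^sup>2) \<ge> \<sigma>"
    using assms by simp
  then have "1 / sqrt (2 * pi * \<sigma>\<^sup>2) \<le> 1 / \<sigma>"
    using assms by (simp add: frac_le)
  moreover have "1 / sqrt (2 * pi * \<sigma>\<^sup>2) * exp (- (x - \<mu>)\<^sup>2 / (2 * \<sigma>\<^sup>2))
      \<le> 1 / sqrt (2 * pi * \<sigma>\<^sup>2)"
    by (rule mult_right_le_one_le) auto
  ultimately show ?thesis
    unfolding normal_density_def by linarith
qed

lemma (in prob_space) expectation_shifted_powr_abs_normal_le:
  assumes D: "distributed M lborel X (normal_density 0 \<sigma>)"
    and \<sigma>: "\<sigma> > 0" and h: "h > 0" and u: "u > 1"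
  shows "expectation (\<lambda>\<omega>. (h + \<bar>X \<omega>\<bar>) powr (- u)) \<le> 2 / (u - 1) * h powr (1 - u) / \<sigma>"
proof -
  have [measurable]: "X \<in> borel_measurable M"
    using distributed_measurable[OF D] by simp
  define B where "B = 2 / (u - 1) * h powr (1 - u) / \<sigma>"
  have "(\<integral>\<^sup>+\<omega>. ennreal ((h + \<bar>X \<omega>\<bar>) powr (- u)) \<partial>M)
      = (\<integral>\<^sup>+x. ennreal (normal_density 0 \<sigma> x) * ennreal ((h + \<bar>x\<bar>) powr (- u)) \<partial>lborel)"
    by (rule distributed_nn_integral[OF D, symmetric]) measurable
  also have "\<dots> \<le> (\<integral>\<^sup>+x. ennreal (1 / \<sigma>) * ennreal ((h + \<bar>x\<bar>) powr (- u)) \<partial>lborel)"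
    by (intro nn_integral_mono mult_right_mono ennreal_leI normal_density_le_inverse \<sigma>) simp
  also have "\<dots> = ennreal (1 / \<sigma>) * (\<integral>\<^sup>+x. ennreal ((h + \<bar>x\<bar>) powr (- u)) \<partial>lborel)"
    by (rule nn_integral_cmult) measurable
  also have "\<dots> \<le> ennreal (1 / \<sigma>) * ennreal (2 * h powr (1 - u) / (u - 1))"
    by (intro mult_left_mono nn_integral_shifted_powr_abs_le h u) simp
  also have "\<dots> = ennreal B"
    unfolding B_def using \<sigma> by (simp add: ennreal_mult'[symmetric] mult.commute)
  finally have "(\<integral>\<^sup>+\<omega>. ennreal ((h + \<bar>X \<omega>\<bar>) powr (- u)) \<partial>M) \<le> ennreal B" .
  then have "enn2real (\<integral>\<^sup>+\<omega>. ennreal ((h + \<bar>X \<omega>\<bar>) powr (- u)) \<partial>M) \<le> B"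
    using \<sigma> u h enn2real_mono[of _ "ennreal B"] unfolding B_def by fastforce
  moreover have "expectation (\<lambda>\<omega>. (h + \<bar>X \<omega>\<bar>) powr (- u))
      = enn2real (\<integral>\<^sup>+\<omega>. ennreal ((h + \<bar>X \<omega>\<bar>) powr (- u)) \<partial>M)"
    by (rule integral_eq_nn_integral) auto
  ultimately show ?thesis unfolding B_def by simp
qed

subsection \<open>Positivity of the variance of sfBm increments\<close>

lemma powr_add_le_add_powr:
  fixes y z q :: real
  assumes y: "y > 0" and z: "z > 0" and q: "q \<le> 1"
  shows "(y + z) powr q \<le> y powr q + z powr q"
proof -
  have "(y + z) powr q = y * (y + z) powr (q - 1) + z * (y + z) powr (q - 1)"
    using y z powr_mult_base[of "y + z" "q - 1"] by (simp add: distrib_right)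
  also have "\<dots> \<le> y * y powr (q - 1) + z * z powr (q - 1)"
    using y z q by (intro add_mono mult_left_mono powr_mono2') auto
  also have "\<dots> = y powr q + z powr q"
    using y z by (simp add: powr_mult_base)
  finally show ?thesis .
qed

lemma powr_add_less_powr_diff_add:
  fixes a x q :: real
  assumes q: "q < 1" and x: "0 < x" "x < a"
  shows "(a + x) powr q < (a - x) powr q + 2 * x powr q"
proof (cases "q \<le> 0")
  case True
  then have "(a + x) powr q \<le> (a - x) powr q" using x by (intro powr_mono2') auto
  moreover have "x powr q > 0" using x by simp
  ultimately show ?thesis by linarith
next
  case False
  have "(a + x) powr q = ((a - x) + 2 * x) powr q" by (simp add: algebra_simps)
  also have "\<dots> \<le> (a - x) powr q + (2 * x) powr q"
    using x q by (intro powr_add_le_add_powr) auto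
  also have "(2 * x) powr q = 2 powr q * x powr q" using x by (simp add: powr_mult)
  also have "2 powr q < 2 powr 1" using q by (intro powr_less_mono) auto
  then have "2 powr q * x powr q < 2 * x powr q" using x by simp
  finally show ?thesis by simp
qed

text \<open>The difference of the two sides vanishes at \<open>b = 0\<close> and, by the previous lemma,
  is strictly decreasing in \<open>b\<close>.\<close>

lemma powr_add_plus_powr_diff_less:
  fixes a b p :: real
  assumes p: "0 < p" "p < 2" and b: "0 < b" "b \<le> a"
  shows "(a + b) powr p + (a - b) powr p < 2 * a powr p + 2 * b powr p"
proof (cases "b = a")
  case True
  have "(2 * b) powr p = 2 powr p * b powr p" using b by (simp add: powr_mult)
  moreover have "2 powr p < 2 powr 2" using p by (intro powr_less_mono) auto
  moreover have "b powr p > 0" using b by simp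
  ultimately show ?thesis using True by (simp add: mult_2[symmetric])
next
  case False
  then have ba: "b < a" using b by simp
  define F where "F x = (a + x) powr p + (a - x) powr p - 2 * a powr p - 2 * x powr p" for x
  define F' where "F' x = p * ((a + x) powr (p - 1) - (a - x) powr (p - 1) - 2 * x powr (p - 1))" for x
  have cont: "continuous_on {0..b} F"
    unfolding F_def using ba p b by (intro continuous_intros continuous_on_powr') auto
  have der: "DERIV F x :> F' x" if "0 < x" "x < b" for x
  proof -
    have "DERIV (\<lambda>y. (a + y) powr p) x :> p * (a + x) powr (p - of_nat 1) * 1"
      by (rule DERIV_fun_powr) (use that ba in \<open>auto intro!: derivative_eq_intros\<close>)
    moreover have "DERIV (\<lambda>y. (a - y) powr p) x :> p * (a - x) powr (p - of_nat 1) * (-1)"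
      by (rule DERIV_fun_powr) (use that ba in \<open>auto intro!: derivative_eq_intros\<close>)
    moreover have "DERIV (\<lambda>y. y powr p) x :> p * x powr (p - 1)"
      by (rule has_real_derivative_powr) (use that in auto)
    ultimately have "DERIV F x :> p * (a + x) powr (p - of_nat 1) * 1
        + p * (a - x) powr (p - of_nat 1) * (-1) - 0 - 2 * (p * x powr (p - 1))"
      unfolding F_def by (intro DERIV_diff DERIV_add DERIV_const DERIV_cmult)
    then show ?thesis unfolding F'_def by (simp add: algebra_simps)
  qed
  obtain l z where z: "0 < z" "z < b" and dz: "DERIV F z :> l" and eq: "F b - F 0 = (b - 0) * l"
    using MVT[OF b(1) cont] der by (metis real_differentiable_def)
  have "l = F' z" using DERIV_unique[OF dz der[OF z]] .
  have "F' z < 0"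
    unfolding F'_def using powr_add_less_powr_diff_add[of "p - 1" z a] p z ba
    by (simp add: mult_pos_neg)
  then have "b * F' z < 0" using b by (simp add: mult_pos_neg)
  then have "F b < F 0" using eq \<open>l = F' z\<close> by simp
  moreover have "F 0 = 0" unfolding F_def using p by simp
  ultimately show ?thesis unfolding F_def by simp
qed

lemma sfbm_increment_variance_pos:
  fixes K s t :: real
  assumes K: "0 < K" "K < 1" and st: "0 \<le> s" "0 \<le> t" "s \<noteq> t"
  shows "sfbm_cov K t t + sfbm_cov K s s - 2 * sfbm_cov K s t > 0"
proof -
  have sym: "sfbm_cov K s t = sfbm_cov K t s"
    unfolding sfbm_cov_def by (simp add: add.commute abs_minus_commute)
  have "sfbm_cov K t t + sfbm_cov K s s - 2 * sfbm_cov K s t > 0"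
    if "s < t" and "0 \<le> s" for s t
  proof -
    have "(s + t + (t - s)) powr (2 * K) + (s + t - (t - s)) powr (2 * K)
        < 2 * (s + t) powr (2 * K) + 2 * (t - s) powr (2 * K)"
      using K that by (intro powr_add_plus_powr_diff_less) auto
    moreover have "s + t + (t - s) = t + t" "s + t - (t - s) = s + s" by simp_all
    ultimately show ?thesis
      using that K unfolding sfbm_cov_def by (simp add: add.commute field_simps)
  qed
  from this[of s t] this[of t s] st sym show ?thesis by (cases "s < t") auto
qed

subsection \<open>Gaussian increments\<close>

lemma integrable_mult_if_square_integrable:
  fixes X Y :: "'a \<Rightarrow> real"
  assumes [measurable]: "X \<in> borel_measurable M" "Y \<in> borel_measurable M"
    and "integrable M (\<lambda>\<omega>. (X \<omega>)\<^sup>2)" "integrable M (\<lambda>\<omega>. (Y \<omega>)\<^sup>2)"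
  shows "integrable M (\<lambda>\<omega>. X \<omega> * Y \<omega>)"
proof (rule Bochner_Integration.integrable_bound[where f = "\<lambda>\<omega>. (X \<omega>)\<^sup>2 + (Y \<omega>)\<^sup>2"])
  show "integrable M (\<lambda>\<omega>. (X \<omega>)\<^sup>2 + (Y \<omega>)\<^sup>2)" using assms by auto
  show "(\<lambda>\<omega>. X \<omega> * Y \<omega>) \<in> borel_measurable M" by measurable
  have "\<bar>X \<omega> * Y \<omega>\<bar> \<le> (X \<omega>)\<^sup>2 + (Y \<omega>)\<^sup>2" for \<omega>
  proof -
    have "2 * \<bar>X \<omega>\<bar> * \<bar>Y \<omega>\<bar> \<le> (X \<omega>)\<^sup>2 + (Y \<omega>)\<^sup>2"
      using sum_squares_bound[of "\<bar>X \<omega>\<bar>" "\<bar>Y \<omega>\<bar>"] by simp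
    moreover have "0 \<le> \<bar>X \<omega>\<bar> * \<bar>Y \<omega>\<bar>" by simp
    ultimately show ?thesis unfolding abs_mult by linarith
  qed
  then show "AE \<omega> in M. norm (X \<omega> * Y \<omega>) \<le> norm ((X \<omega>)\<^sup>2 + (Y \<omega>)\<^sup>2)" by simp
qed

lemma (in prob_space) centered_gaussian_square_integrable:
  assumes "centered_gaussian M Y"
  shows "integrable M (\<lambda>\<omega>. (Y \<omega>)\<^sup>2)"
proof -
  have [measurable]: "Y \<in> borel_measurable M" using assms unfolding centered_gaussian_def by simp
  from assms consider "AE \<omega> in M. Y \<omega> = 0"
    | \<sigma> where "\<sigma> > 0" "distributed M lborel Y (normal_density 0 \<sigma>)"
    unfolding centered_gaussian_def by blast
  then show ?thesis
  proof cases
    case 1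
    have "integrable M (\<lambda>\<omega>. (0::real))" by simp
    then show ?thesis by (rule integrable_cong_AE_imp) (use 1 in auto)
  next
    case 2
    have "integrable lborel (\<lambda>x. normal_density 0 \<sigma> x * (x - 0) ^ 2)"
      by (rule integrable_normal_moment) (rule 2(1))
    then show ?thesis
      using distributed_integrable[OF 2(2), of "\<lambda>x. x ^ 2"] by simp
  qed
qed

lemma (in prob_space) normal_second_moment:
  assumes "\<sigma> > 0" "distributed M lborel Y (normal_density 0 \<sigma>)"
  shows "expectation (\<lambda>\<omega>. (Y \<omega>)\<^sup>2) = \<sigma>\<^sup>2"
  using normal_distributed_variance[OF assms] normal_distributed_expectation[OF assms] by simp

lemma (in prob_space) centered_gaussian_normal_if_second_moment_pos:
  assumes "centered_gaussian M Y" and "expectation (\<lambda>\<omega>. (Y \<omega>)\<^sup>2) > 0"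
  shows "\<exists>\<sigma>>0. distributed M lborel Y (normal_density 0 \<sigma>)"
proof -
  have [measurable]: "Y \<in> borel_measurable M" using assms(1) unfolding centered_gaussian_def by simp
  have "\<not> (AE \<omega> in M. Y \<omega> = 0)"
  proof
    assume "AE \<omega> in M. Y \<omega> = 0"
    then have "expectation (\<lambda>\<omega>. (Y \<omega>)\<^sup>2) = expectation (\<lambda>\<omega>. 0::real)"
      by (intro integral_cong_AE) auto
    with assms(2) show False by simp
  qed
  with assms(1) show ?thesis unfolding centered_gaussian_def by blast
qed

lemma is_sfbm_sum_centered_gaussian:
  assumes "is_sfbm M K \<xi>" "finite T" "T \<subseteq> {0..}"
  shows "centered_gaussian M (\<lambda>\<omega>. \<Sum>t\<in>T. c t * \<xi> t \<omega>)"
  using assms unfolding is_sfbm_def by blast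

lemma is_sfbm_covariance:
  assumes "is_sfbm M K \<xi>" "0 \<le> s" "0 \<le> t"
  shows "integral\<^sup>L M (\<lambda>\<omega>. \<xi> t \<omega> * \<xi> s \<omega>) = sfbm_cov K s t"
  using assms unfolding is_sfbm_def by blast

lemma is_sfbm_centered_gaussian:
  assumes "is_sfbm M K \<xi>" "0 \<le> t"
  shows "centered_gaussian M (\<xi> t)"
proof -
  have "centered_gaussian M (\<lambda>\<omega>. \<Sum>r\<in>{t}. 1 * \<xi> r \<omega>)"
    using assms by (intro is_sfbm_sum_centered_gaussian) auto
  then show ?thesis by simp
qed

lemma is_sfbm_increment_centered_gaussian:
  assumes "is_sfbm M K \<xi>" "0 \<le> s" "0 \<le> t" "s \<noteq> t"
  shows "centered_gaussian M (\<lambda>\<omega>. \<xi> t \<omega> - \<xi> s \<omega>)"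
proof -
  let ?c = "\<lambda>r. if r = t then 1 else -1 :: real"
  have "centered_gaussian M (\<lambda>\<omega>. \<Sum>r\<in>{s, t}. ?c r * \<xi> r \<omega>)"
    using assms by (intro is_sfbm_sum_centered_gaussian) auto
  moreover have "(\<lambda>\<omega>. \<Sum>r\<in>{s, t}. ?c r * \<xi> r \<omega>) = (\<lambda>\<omega>. \<xi> t \<omega> - \<xi> s \<omega>)"
    using assms(4) by auto
  ultimately show ?thesis by simp
qed

lemma sfbm_increment_second_moment:
  assumes "prob_space M" "is_sfbm M K \<xi>" and st: "0 \<le> s" "0 \<le> t"
  shows "integral\<^sup>L M (\<lambda>\<omega>. (\<xi> t \<omega> - \<xi> s \<omega>)\<^sup>2)
    = sfbm_cov K t t + sfbm_cov K s s - 2 * sfbm_cov K s t"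
proof -
  interpret prob_space M by fact
  have [measurable]: "\<xi> r \<in> borel_measurable M" and "integrable M (\<lambda>\<omega>. (\<xi> r \<omega>)\<^sup>2)"
    if "0 \<le> r" for r
    using is_sfbm_centered_gaussian[OF assms(2) that] centered_gaussian_square_integrable
    unfolding centered_gaussian_def by auto
  then have int: "integrable M (\<lambda>\<omega>. \<xi> r \<omega> * \<xi> r' \<omega>)" if "0 \<le> r" "0 \<le> r'" for r r'
    using that by (intro integrable_mult_if_square_integrable)
  have cov: "integral\<^sup>L M (\<lambda>\<omega>. \<xi> r \<omega> * \<xi> r' \<omega>) = sfbm_cov K r' r" if "0 \<le> r" "0 \<le> r'" for r r'
    using is_sfbm_covariance[OF assms(2) that(2,1)] .
  have "(\<lambda>\<omega>. (\<xi> t \<omega> - \<xi> s \<omega>)\<^sup>2)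
      = (\<lambda>\<omega>. (\<xi> t \<omega> * \<xi> t \<omega> + \<xi> s \<omega> * \<xi> s \<omega>) - 2 * (\<xi> t \<omega> * \<xi> s \<omega>))"
    by (auto simp: power2_eq_square algebra_simps)
  then show ?thesis
    using int[OF st(2) st(2)] int[OF st(1) st(1)] int[OF st(2) st(1)]
      cov[OF st(2) st(2)] cov[OF st(1) st(1)] cov[OF st(2) st(1)]
    by (simp add: Bochner_Integration.integral_diff Bochner_Integration.integral_add)
qed

lemma sfbm_increment_normal:
  assumes "prob_space M" "is_sfbm M K \<xi>" "0 < K" "K < 1" and st: "0 \<le> s" "0 \<le> t" "s \<noteq> t"
  shows "\<exists>\<sigma>>0. distributed M lborel (\<lambda>\<omega>. \<xi> t \<omega> - \<xi> s \<omega>) (normal_density 0 \<sigma>)"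
proof -
  interpret prob_space M by fact
  have "expectation (\<lambda>\<omega>. (\<xi> t \<omega> - \<xi> s \<omega>)\<^sup>2) > 0"
    unfolding sfbm_increment_second_moment[OF assms(1,2) st(1,2)]
    by (rule sfbm_increment_variance_pos[OF assms(3,4) st])
  then show ?thesis
    by (intro centered_gaussian_normal_if_second_moment_pos is_sfbm_increment_centered_gaussian[OF assms(2) st])
qed

lemma msfbm_increment_normal:
  assumes "prob_space M"
    and "\<forall>i<N. 0 < H i \<and> H i < 1"
    and "\<exists>i<N. a i \<noteq> 0"
    and "\<forall>i<N. is_sfbm M (H i) (\<xi> i)"
    and indep: "prob_space.indep_vars M (\<lambda>_. PiM {0..} (\<lambda>_. borel)) (\<lambda>i. sfbm_path (\<xi> i)) {..<N}"
    and st: "0 \<le> s" "0 \<le> t" "s \<noteq> t"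
  shows "\<exists>\<sigma>>0. distributed M lborel (\<lambda>\<omega>. msfbm N a \<xi> t \<omega> - msfbm N a \<xi> s \<omega>) (normal_density 0 \<sigma>)"
proof -
  interpret prob_space M by fact
  define Y where "Y i \<omega> = \<xi> i t \<omega> - \<xi> i s \<omega>" for i \<omega>
  define J where "J = {i. i < N \<and> a i \<noteq> 0}"
  have "finite J" "J \<noteq> {}" using assms(3) unfolding J_def by auto
  have "\<forall>i\<in>J. \<exists>\<sigma>>0. distributed M lborel (Y i) (normal_density 0 \<sigma>)"
    unfolding J_def Y_def using assms(1,2,4) st by (blast intro: sfbm_increment_normal)
  then obtain \<sigma> where \<sigma>: "\<And>i. i \<in> J \<Longrightarrow> \<sigma> i > 0 \<and> distributed M lborel (Y i) (normal_density 0 (\<sigma> i))"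
    by metis
  have normal: "distributed M lborel (\<lambda>\<omega>. a i * Y i \<omega>) (normal_density 0 (\<bar>a i\<bar> * \<sigma> i))"
    if "i \<in> J" for i
    using normal_density_affine[of "Y i" 0 "\<sigma> i" "a i" 0] \<sigma>[OF that] that by (simp add: J_def)
  have pos: "0 < \<bar>a i\<bar> * \<sigma> i" if "i \<in> J" for i
    using \<sigma>[OF that] that by (simp add: J_def)
  have [measurable]: "(\<lambda>f. f r) \<in> borel_measurable (PiM {0..} (\<lambda>_. borel))" if "0 \<le> r" for r
    by (rule measurable_component_singleton) (use that in auto)
  have "indep_vars (\<lambda>_. borel) (\<lambda>i \<omega>. (\<lambda>f. a i * (f t - f s)) (sfbm_path (\<xi> i) \<omega>)) {..<N}"
    using st by (intro indep_vars_compose2[OF indep]) measurable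
  moreover have "(\<lambda>i \<omega>. (\<lambda>f. a i * (f t - f s)) (sfbm_path (\<xi> i) \<omega>)) = (\<lambda>i \<omega>. a i * Y i \<omega>)"
    using st by (auto simp: fun_eq_iff sfbm_path_def Y_def)
  ultimately have "indep_vars (\<lambda>_. borel) (\<lambda>i \<omega>. a i * Y i \<omega>) J"
    by (auto intro: indep_vars_subset simp: J_def)
  from sum_indep_normal[OF \<open>finite J\<close> \<open>J \<noteq> {}\<close> this pos normal]
  have sum_normal: "distributed M lborel (\<lambda>\<omega>. \<Sum>i\<in>J. a i * Y i \<omega>)
      (normal_density 0 (sqrt (\<Sum>i\<in>J. (\<bar>a i\<bar> * \<sigma> i)\<^sup>2)))"
    by simp
  have sum_pos: "0 < sqrt (\<Sum>i\<in>J. (\<bar>a i\<bar> * \<sigma> i)\<^sup>2)"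
    using \<open>finite J\<close> \<open>J \<noteq> {}\<close> by (intro real_sqrt_gt_zero sum_pos zero_less_power pos)
  have increment_eq: "msfbm N a \<xi> t \<omega> - msfbm N a \<xi> s \<omega> = (\<Sum>i\<in>J. a i * Y i \<omega>)" for \<omega>
  proof -
    have "msfbm N a \<xi> t \<omega> - msfbm N a \<xi> s \<omega> = (\<Sum>i<N. a i * Y i \<omega>)"
      unfolding msfbm_def Y_def by (simp add: sum_subtractf right_diff_distrib)
    also have "\<dots> = (\<Sum>i\<in>J. a i * Y i \<omega>)"
      by (rule sum.mono_neutral_right) (auto simp: J_def)
    finally show ?thesis .
  qed
  show ?thesis unfolding increment_eq using sum_normal sum_pos by blast
qed

theorem lemma15:
  fixes M :: "'a measure" and N :: nat and H a :: "nat \<Rightarrow> real"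
    and \<xi> :: "nat \<Rightarrow> real \<Rightarrow> 'a \<Rightarrow> real" and u :: real
  assumes "prob_space M"
    and "N \<ge> 1"
    and "\<forall>i<N. 0 < H i \<and> H i < 1"
    and "\<exists>i<N. a i \<noteq> 0"
    and "\<forall>i<N. is_sfbm M (H i) (\<xi> i)"
    and "prob_space.indep_vars M (\<lambda>_. PiM {0..} (\<lambda>_. borel))
           (\<lambda>i. sfbm_path (\<xi> i)) {..<N}"
    and "u > 1"
  shows "\<exists>c>0. \<forall>s t. 0 \<le> s \<and> 0 \<le> t \<and> s \<noteq> t \<longrightarrow>
     integral\<^sup>L M (\<lambda>\<omega>. (\<bar>s - t\<bar> + \<bar>msfbm N a \<xi> t \<omega> - msfbm N a \<xi> s \<omega>\<bar>) powr (- u))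
       \<le> c * \<bar>t - s\<bar> powr (1 - u)
           / sqrt (integral\<^sup>L M (\<lambda>\<omega>. (msfbm N a \<xi> t \<omega> - msfbm N a \<xi> s \<omega>)\<^sup>2))"
proof (intro exI[of _ "2 / (u - 1)"] conjI allI impI)
  interpret prob_space M by fact
  show "2 / (u - 1) > 0" using \<open>u > 1\<close> by simp
  fix s t :: real assume "0 \<le> s \<and> 0 \<le> t \<and> s \<noteq> t"
  then obtain \<sigma> where \<sigma>: "\<sigma> > 0"
    and D: "distributed M lborel (\<lambda>\<omega>. msfbm N a \<xi> t \<omega> - msfbm N a \<xi> s \<omega>) (normal_density 0 \<sigma>)"
    using msfbm_increment_normal[OF assms(1,3,4,5,6)] by blast
  have "\<bar>t - s\<bar> > 0" using \<open>0 \<le> s \<and> 0 \<le> t \<and> s \<noteq> t\<close> by simp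
  from expectation_shifted_powr_abs_normal_le[OF D \<sigma> this \<open>u > 1\<close>]
  show "expectation (\<lambda>\<omega>. (\<bar>s - t\<bar> + \<bar>msfbm N a \<xi> t \<omega> - msfbm N a \<xi> s \<omega>\<bar>) powr (- u))
      \<le> 2 / (u - 1) * \<bar>t - s\<bar> powr (1 - u)
        / sqrt (expectation (\<lambda>\<omega>. (msfbm N a \<xi> t \<omega> - msfbm N a \<xi> s \<omega>)\<^sup>2))"
    using normal_second_moment[OF \<sigma> D] \<sigma> by (simp add: abs_minus_commute)
qed

end
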